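(* Let $(A, b, c)$ be a $k$-level LP instance. Let $p \le k-1$ and write $A_{pi} = \begin{pmatrix} A'_{pi} \\ A''_{pi}\end{pmatrix}$, $b_p = \begin{pmatrix} b'_p \\ b''_p\end{pmatrix}$ for each $i = 1,\ldots,k$, such that $A'_{pi} = 0$ for all $i = p+1,\ldots,k$. Define a $k$-level LP instance $(\hat{A}, \hat{b}, \hat{c})$ by $\hat{c} = c$, $\hat{A}_{li} = A_{li}$, $\hat{b}_l = b_l$ for all $l \ne p, p+1$ and all $i$, and $\hat{A}_{pi} = A''_{pi}$, $\hat{b}_p = b''_p$, $\hat{A}_{p+1\,i} = \begin{pmatrix} A'_{pi} \\ A_{p+1\,i}\end{pmatrix}$, $\hat{b}_{p+1} = \begin{pmatrix} b'_p \\ b_{p+1}\end{pmatrix}$ for $i = 1,\ldots,k$. Then the feasible set of the instance $(A,b,c)$ equals the feasible set of the instance $(\hat{A}, \hat{b}, \hat{c})$.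
   Context: A $k$-level LP instance $(A,b,c)$ has data $A_{li} \in \mathbb{Q}^{m_l \times n_i}$, $b_l \in \mathbb{Q}^{m_l}$, $c_{li} \in \mathbb{Q}^{n_i}$. Player $l$ chooses $x_l \in \mathbb{R}^{n_l}$ after players $1,\ldots,l-1$. The $l$-th player's problem, given $x_1,\ldots,x_{l-1}$, is $\inf_{x_l,\ldots,x_k}\{\sum_{i=l}^k c_{li}^\top x_i : \sum_{i=1}^k A_{li}x_i \ge b_l,\ (x_{l+1},\ldots,x_k) \in \mathcal{S}(\text{problem of player } l+1 \text{ given } x_1,\ldots,x_l)\}$, and the $k$-th player's problem is $\inf_{x_k}\{c_{kk}^\top x_k : \sum_{i=1}^k A_{ki}x_i \ge b_k\}$. The instance is identified with the first player's problem; its feasible set is the set of feasible $(x_1,\ldots,x_k)$ of the first player's problem. $\mathcal{S}(\cdot)$ denotes the optimal solution set (optimistic setting). *)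

theory Defs
  imports Main Complex_Main
begin

text \<open>Players are indexed 1..k.  Player i has n i variables
(indices j < n i), level l has m l constraints (rows r < m l).
Data: A l i r j (entry (r,j) of block A_{li}), b l r, c l i j, all rational.
A point (x_1,...,x_k) is encoded as x :: nat => nat => real, x i j = j-th component
of x_i, with all components outside the index ranges equal to 0.\<close>

type_synonym point = "nat \<Rightarrow> nat \<Rightarrow> real"

definition in_dom :: "nat \<Rightarrow> (nat \<Rightarrow> nat) \<Rightarrow> point \<Rightarrow> bool" where
  "in_dom k n x \<longleftrightarrow> (\<forall>i j. (i < 1 \<or> k < i \<or> n i \<le> j) \<longrightarrow> x i j = 0)"

definition cons_ok :: "nat \<Rightarrow> (nat \<Rightarrow> nat) \<Rightarrow> (nat \<Rightarrow> nat)
    \<Rightarrow> (nat \<Rightarrow> nat \<Rightarrow> nat \<Rightarrow> nat \<Rightarrow> rat) \<Rightarrow> (nat \<Rightarrow> nat \<Rightarrow> rat) \<Rightarrow> nat \<Rightarrow> point \<Rightarrow> bool" where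
  "cons_ok k n m A b l x \<longleftrightarrow>
     (\<forall>r < m l. real_of_rat (b l r) \<le> (\<Sum>i=1..k. \<Sum>j<n i. real_of_rat (A l i r j) * x i j))"

definition obj :: "nat \<Rightarrow> (nat \<Rightarrow> nat) \<Rightarrow> (nat \<Rightarrow> nat \<Rightarrow> nat \<Rightarrow> rat) \<Rightarrow> nat \<Rightarrow> point \<Rightarrow> real" where
  "obj k n c l x = (\<Sum>i=l..k. \<Sum>j<n i. real_of_rat (c l i j) * x i j)"

definition agree :: "nat \<Rightarrow> point \<Rightarrow> point \<Rightarrow> bool" where
  "agree l y x \<longleftrightarrow> (\<forall>i < l. \<forall>j. y i j = x i j)"

text \<open>lfeas ... d x: x is feasible for the problem of player l = k - d given x_1..x_{l-1}.
For d = 0 this is the k-th player's problem; for d > 0 the tail must be an optimal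
solution (optimistic setting) of the problem of player l+1 = k - d given x_1..x_l.\<close>
primrec lfeas :: "nat \<Rightarrow> (nat \<Rightarrow> nat) \<Rightarrow> (nat \<Rightarrow> nat)
    \<Rightarrow> (nat \<Rightarrow> nat \<Rightarrow> nat \<Rightarrow> nat \<Rightarrow> rat) \<Rightarrow> (nat \<Rightarrow> nat \<Rightarrow> rat) \<Rightarrow> (nat \<Rightarrow> nat \<Rightarrow> nat \<Rightarrow> rat)
    \<Rightarrow> nat \<Rightarrow> point \<Rightarrow> bool" where
  "lfeas k n m A b c 0 x \<longleftrightarrow> in_dom k n x \<and> cons_ok k n m A b k x"
| "lfeas k n m A b c (Suc d) x \<longleftrightarrow>
     in_dom k n x \<and> cons_ok k n m A b (k - Suc d) x \<and> lfeas k n m A b c d x \<and>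
     (\<forall>y. agree (k - d) y x \<and> lfeas k n m A b c d y \<longrightarrow> obj k n c (k - d) x \<le> obj k n c (k - d) y)"

definition feasible_set :: "nat \<Rightarrow> (nat \<Rightarrow> nat) \<Rightarrow> (nat \<Rightarrow> nat)
    \<Rightarrow> (nat \<Rightarrow> nat \<Rightarrow> nat \<Rightarrow> nat \<Rightarrow> rat) \<Rightarrow> (nat \<Rightarrow> nat \<Rightarrow> rat) \<Rightarrow> (nat \<Rightarrow> nat \<Rightarrow> nat \<Rightarrow> rat)
    \<Rightarrow> point set" where
  "feasible_set k n m A b c = {x. lfeas k n m A b c (k - 1) x}"

end

theory Submission
  imports Defs
begin

(* The moved rows A'_p x >= b'_p involve only x_1, ..., x_p, so on all points that
   player p+1 compares they amount to one fixed condition C. Moving them from level p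
   to level p+1 therefore leaves the optimal responses of player p+1 unchanged, and
   every level up to p imposes C in both instances: directly at level p in the original
   one, through the feasibility required at level p+1 in the new one. *)

lemma all_less_add_split:
  "(\<forall>r < a + (b::nat). P r) \<longleftrightarrow> (\<forall>r < a. P r) \<and> (\<forall>r < b. P (r + a))"
proof safe
  fix r assume "\<forall>r < a. P r" "\<forall>r < b. P (r + a)" "r < a + b"
  then show "P r" by (cases "r < a") (auto dest: spec[of _ "r - a"])
qed auto

lemma cons_ok_agree:
  assumes "\<forall>i\<in>{q+1..k}. \<forall>r<m l. \<forall>j<n i. A l i r j = 0"
    and "agree (q + 1) y x"
  shows "cons_ok k n m A b l y = cons_ok k n m A b l x"
proof -
  have "real_of_rat (A l i r j) * y i j = real_of_rat (A l i r j) * x i j"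
    if "i \<in> {1..k}" "j < n i" "r < m l" for i r j
    using assms that by (cases "i \<le> q") (auto simp: agree_def)
  then show ?thesis
    unfolding cons_ok_def by (intro all_cong arg_cong2[where f = "(\<le>)"] sum.cong) auto
qed

lemma cons_ok_drop_leading_rows:
  assumes "s \<le> m l" "m' l = m l - s"
    and "\<And>i r j. A' l i r j = A l i (r + s) j" "\<And>r. b' l r = b l (r + s)"
  shows "cons_ok k n m A b l x \<longleftrightarrow> cons_ok k n (\<lambda>_. s) A b l x \<and> cons_ok k n m' A' b' l x"
proof -
  have "m l = s + m' l" using assms(1,2) by simp
  then show ?thesis
    unfolding cons_ok_def using assms(3,4) by (simp only: all_less_add_split)
qed

lemma cons_ok_prepend_rows:
  assumes "m' l' = s + m l'"
    and "\<And>i r j. A' l' i r j = (if r < s then A l i r j else A l' i (r - s) j)"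
    and "\<And>r. b' l' r = (if r < s then b l r else b l' (r - s))"
  shows "cons_ok k n m' A' b' l' x \<longleftrightarrow> cons_ok k n (\<lambda>_. s) A b l x \<and> cons_ok k n m A b l' x"
  unfolding cons_ok_def assms(1) all_less_add_split by (simp add: assms(2,3))

lemma lfeas_move_condition:
  assumes "p < k" and "d < k"
    and C_local: "\<And>x y. agree (p + 1) y x \<Longrightarrow> C y = C x"
    and at_p: "\<And>x. cons_ok k n m A b p x \<longleftrightarrow> C x \<and> cons_ok k n m' A' b' p x"
    and at_p1: "\<And>x. cons_ok k n m' A' b' (p + 1) x \<longleftrightarrow> C x \<and> cons_ok k n m A b (p + 1) x"
    and elsewhere: "\<And>l x. l \<noteq> p \<Longrightarrow> l \<noteq> p + 1 \<Longrightarrow> cons_ok k n m' A' b' l x = cons_ok k n m A b l x"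
  shows "lfeas k n m' A' b' c d x \<longleftrightarrow> lfeas k n m A b c d x \<and> (k - d = p + 1 \<longrightarrow> C x)"
  using \<open>d < k\<close>
proof (induction d arbitrary: x)
  case 0
  then show ?case
    using \<open>p < k\<close> at_p1 elsewhere[of k] by (cases "k = p + 1") auto
next
  case (Suc d)
  define l where "l = k - Suc d"
  have level: "k - Suc d = l" "k - d = l + 1" using Suc.prems by (simp_all add: l_def)
  have IH: "lfeas k n m' A' b' c d y \<longleftrightarrow> lfeas k n m A b c d y \<and> (l = p \<longrightarrow> C y)" for y
    using Suc level by simp
  have same_rivals: "lfeas k n m' A' b' c d y \<longleftrightarrow> lfeas k n m A b c d y"
    if "agree (l + 1) y x" "l = p \<longrightarrow> C x" for y
    using IH C_local[of y x] that by auto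
  show ?case
  proof (cases "l = p")
    case True
    \<comment> \<open>the old instance imposes C at level p, the new one at level p + 1\<close>
    have "C x" if "lfeas k n m' A' b' c (Suc d) x \<or> lfeas k n m A b c (Suc d) x"
      using that IH at_p True level by auto
    then show ?thesis using IH at_p same_rivals True level by auto
  next
    case False
    then show ?thesis
      using IH at_p1 elsewhere[of l] same_rivals level by (cases "l = p + 1") auto
  qed
qed

lemma feasible_set_move_condition:
  assumes "1 \<le> p" "p < k"
    and "\<And>x y. agree (p + 1) y x \<Longrightarrow> C y = C x"
    and "\<And>x. cons_ok k n m A b p x \<longleftrightarrow> C x \<and> cons_ok k n m' A' b' p x"
    and "\<And>x. cons_ok k n m' A' b' (p + 1) x \<longleftrightarrow> C x \<and> cons_ok k n m A b (p + 1) x"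
    and "\<And>l x. l \<noteq> p \<Longrightarrow> l \<noteq> p + 1 \<Longrightarrow> cons_ok k n m' A' b' l x = cons_ok k n m A b l x"
  shows "feasible_set k n m A b c = feasible_set k n m' A' b' c"
  using lfeas_move_condition[of p k "k - 1" C, OF _ _ assms(3-6)] assms(1,2)
  unfolding feasible_set_def by auto

theorem lemma3p3:
  fixes k p m' :: nat and n m mh :: "nat \<Rightarrow> nat"
    and A Ah :: "nat \<Rightarrow> nat \<Rightarrow> nat \<Rightarrow> nat \<Rightarrow> rat"
    and b bh :: "nat \<Rightarrow> nat \<Rightarrow> rat"
    and c :: "nat \<Rightarrow> nat \<Rightarrow> nat \<Rightarrow> rat"
  assumes hp: "1 \<le> p" "p \<le> k - 1"
    and hm': "m' \<le> m p"
    and hzero: "\<forall>i\<in>{p+1..k}. \<forall>r<m'. \<forall>j<n i. A p i r j = 0"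
    and hmh: "mh p = m p - m'" "mh (p+1) = m' + m (p+1)"
      "\<forall>l. l \<noteq> p \<and> l \<noteq> p+1 \<longrightarrow> mh l = m l"
    and hAh_other: "\<forall>l i r j. l \<noteq> p \<and> l \<noteq> p+1 \<longrightarrow> Ah l i r j = A l i r j"
    and hbh_other: "\<forall>l r. l \<noteq> p \<and> l \<noteq> p+1 \<longrightarrow> bh l r = b l r"
    and hAh_p: "\<forall>i r j. Ah p i r j = A p i (r + m') j"
    and hbh_p: "\<forall>r. bh p r = b p (r + m')"
    and hAh_p1: "\<forall>i r j. Ah (p+1) i r j = (if r < m' then A p i r j else A (p+1) i (r - m') j)"
    and hbh_p1: "\<forall>r. bh (p+1) r = (if r < m' then b p r else b (p+1) (r - m'))"
  shows "feasible_set k n m A b c = feasible_set k n mh Ah bh c"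
proof (rule feasible_set_move_condition)
  let ?C = "cons_ok k n (\<lambda>_. m') A b p"
  show "1 \<le> p" "p < k" using hp by auto
  show "?C y = ?C x" if "agree (p + 1) y x" for x y
    using cons_ok_agree[OF _ that] hzero by simp
  show "cons_ok k n m A b p x \<longleftrightarrow> ?C x \<and> cons_ok k n mh Ah bh p x" for x
    by (rule cons_ok_drop_leading_rows) (use hm' hmh(1) hAh_p hbh_p in blast)+
  show "cons_ok k n mh Ah bh (p + 1) x \<longleftrightarrow> ?C x \<and> cons_ok k n m A b (p + 1) x" for x
    by (rule cons_ok_prepend_rows) (use hmh(2) hAh_p1 hbh_p1 in blast)+
  show "cons_ok k n mh Ah bh l x = cons_ok k n m A b l x" if "l \<noteq> p" "l \<noteq> p + 1" for l x
    using that hmh(3) hAh_other hbh_other unfolding cons_ok_def by simp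
qed

end
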